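(* Let $\lambda>0$ and $\gamma>0$. Let $\mathcal{F}_p^\lambda(r)=\{F_\lambda(x):x\in B_p(r)\}$. Let $$B_p^\gamma(r)=\{x\in B_p(r):\|x(\xi)\|\le\gamma\text{ for every }\xi\in\Omega\},$$ and let $\mathcal{F}_p^{\lambda,\gamma}(r)=\{F_\lambda(x):x\in B_p^\gamma(r)\}$. Then $$h_q\big(\mathcal{F}_p^\lambda(r),\mathcal{F}_p^{\lambda,\gamma}(r)\big)\le\frac{2r^p[\mu(\Omega)]^{1/q}M(\lambda)}{\gamma^{p-1}}.$$
   Context: Let $k,m,n\ge 1$ be integers and let $\Omega\subset\mathbb{R}^k$ be a compact set. Let $\mu$ denote Lebesgue measure. Let $p>1$, let $q$ satisfy $1/p+1/q=1$, and let $r>0$. $\|\cdot\|$ denotes the Euclidean norm on vectors and the Euclidean (Frobenius) norm on $m\times n$ matrices. $L_p(\Omega;\mathbb{R}^n)$ is the space of Lebesgue measurable $x:\Omega\to\mathbb{R}^n$ with $\|x\|_p=(\int_\Omega\|x(s)\|^p\,ds)^{1/p}<\infty$, and $B_p(r)=\{x\in L_p(\Omega;\mathbb{R}^n):\|x\|_p\le r\}$. $K_\lambda:\Omega\times\Omega\to\mathbb{R}^{m\times n}$ is a continuous function. Set $F_\lambda(x)(\xi)=\int_\Omega K_\lambda(\xi,s)x(s)\,ds$ and $M(\lambda)=\max\{\|K_\lambda(\xi,s)\|:(\xi,s)\in\Omega\times\Omega\}$. $h_q(U,V)=\max\{\sup_{u\in U}\inf_{v\in V}\|u-v\|_q,\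 \sup_{v\in V}\inf_{u\in U}\|u-v\|_q\}$ is the Hausdorff distance in $L_q(\Omega;\mathbb{R}^m)$. *)

theory Defs
  imports "HOL-Analysis.Analysis"
begin

definition Lp_norm :: "'a::euclidean_space set \<Rightarrow> real \<Rightarrow> ('a \<Rightarrow> 'b::real_normed_vector) \<Rightarrow> real" where
  "Lp_norm \<Omega> p x = enn2real (\<integral>\<^sup>+ s. ennreal (norm (x s) powr p) \<partial>(lebesgue_on \<Omega>)) powr (1 / p)"

definition Lp_space :: "'a::euclidean_space set \<Rightarrow> real \<Rightarrow> ('a \<Rightarrow> 'b::euclidean_space) set" where
  "Lp_space \<Omega> p = {x. x \<in> borel_measurable (lebesgue_on \<Omega>) \<and>
      (\<integral>\<^sup>+ s. ennreal (norm (x s) powr p) \<partial>(lebesgue_on \<Omega>)) < \<infinity>}"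

definition Bp :: "'a::euclidean_space set \<Rightarrow> real \<Rightarrow> real \<Rightarrow> ('a \<Rightarrow> 'b::euclidean_space) set" where
  "Bp \<Omega> p r = {x \<in> Lp_space \<Omega> p. Lp_norm \<Omega> p x \<le> r}"

definition Bp_gamma :: "'a::euclidean_space set \<Rightarrow> real \<Rightarrow> real \<Rightarrow> real \<Rightarrow> ('a \<Rightarrow> 'b::euclidean_space) set" where
  "Bp_gamma \<Omega> p r \<gamma> = {x \<in> Bp \<Omega> p r. \<forall>\<xi>\<in>\<Omega>. norm (x \<xi>) \<le> \<gamma>}"

definition F_op :: "'k::euclidean_space set \<Rightarrow> ('k \<Rightarrow> 'k \<Rightarrow> real^'n^'m) \<Rightarrow> ('k \<Rightarrow> real^'n) \<Rightarrow> 'k \<Rightarrow> real^'m" where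
  "F_op \<Omega> K x \<xi> = (LINT s|lebesgue_on \<Omega>. K \<xi> s *v x s)"

text \<open>M(lambda): maximum of the Frobenius norm of the kernel on Omega x Omega.\<close>
definition Mker :: "'k set \<Rightarrow> ('k \<Rightarrow> 'k \<Rightarrow> real^'n^'m) \<Rightarrow> real" where
  "Mker \<Omega> K = Sup ((\<lambda>(\<xi>, s). norm (K \<xi> s)) ` (\<Omega> \<times> \<Omega>))"

definition hausdorff_q :: "'a::euclidean_space set \<Rightarrow> real \<Rightarrow> ('a \<Rightarrow> 'b::real_normed_vector) set \<Rightarrow> ('a \<Rightarrow> 'b) set \<Rightarrow> real" where
  "hausdorff_q \<Omega> q U V = max (SUP u\<in>U. INF v\<in>V. Lp_norm \<Omega> q (\<lambda>\<xi>. u \<xi> - v \<xi>))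
                             (SUP v\<in>V. INF u\<in>U. Lp_norm \<Omega> q (\<lambda>\<xi>. u \<xi> - v \<xi>))"

end

theory Submission
  imports Defs
begin

text \<open>Truncate x at height gamma, keeping x where its norm is at most gamma and setting it
  to 0 elsewhere. The truncation lies in the smaller ball, and where it differs from x we have
  |x| <= |x|^p / gamma^(p-1), so the L_1 distance of x to its truncation is at most
  r^p / gamma^(p-1). Bounding the kernel by M(lambda) turns this into the uniform bound
  M(lambda) r^p / gamma^(p-1) for the difference of the images, hence an L_q bound with the
  extra factor mu(Omega)^(1/q). As the smaller ball is contained in the larger one, the other
  half of the Hausdorff distance vanishes, so the estimate even holds without the factor 2.\<close>

lemma Lp_norm_nonneg: "Lp_norm \<Omega> p f \<ge> 0"
  by (simp add: Lp_norm_def)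

lemma Lp_norm_le_const:
  fixes f :: "'a::euclidean_space \<Rightarrow> 'b::real_normed_vector"
  assumes \<Omega>: "\<Omega> \<in> lmeasurable" and q: "q > 0"
    and bound: "\<And>\<xi>. \<xi> \<in> \<Omega> \<Longrightarrow> norm (f \<xi>) \<le> C"
  shows "Lp_norm \<Omega> q f \<le> C * measure lebesgue \<Omega> powr (1/q)"
proof (cases "\<Omega> = {}")
  case True
  then show ?thesis by (simp add: Lp_norm_def nn_integral_empty)
next
  case False
  then have C: "C \<ge> 0" using bound norm_ge_zero order_trans by blast
  have "(\<integral>\<^sup>+ s. ennreal (norm (f s) powr q) \<partial>lebesgue_on \<Omega>) \<le> (\<integral>\<^sup>+ s. ennreal (C powr q) \<partial>lebesgue_on \<Omega>)"
    by (rule nn_integral_mono) (use bound q in \<open>auto intro!: powr_mono2\<close>)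
  also have "\<dots> = ennreal (C powr q * measure lebesgue \<Omega>)"
    using \<Omega> by (simp add: emeasure_restrict_space emeasure_eq_measure2 ennreal_mult)
  finally have "enn2real (\<integral>\<^sup>+ s. ennreal (norm (f s) powr q) \<partial>lebesgue_on \<Omega>) \<le> C powr q * measure lebesgue \<Omega>"
    by (metis enn2real_ennreal enn2real_mono ennreal_less_top measure_nonneg mult_nonneg_nonneg powr_ge_zero)
  then have "Lp_norm \<Omega> q f \<le> (C powr q * measure lebesgue \<Omega>) powr (1/q)"
    unfolding Lp_norm_def using q by (intro powr_mono2) auto
  also have "\<dots> = C * measure lebesgue \<Omega> powr (1/q)"
    using C q by (simp add: powr_mult powr_powr)
  finally show ?thesis .
qed

lemma integrable_norm_powr_Lp_space:
  assumes "x \<in> Lp_space \<Omega> p"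
  shows "integrable (lebesgue_on \<Omega>) (\<lambda>s. norm (x s) powr p)"
  using assms by (intro integrableI_nonneg) (auto simp: Lp_space_def)

lemma integral_norm_powr_le_Bp:
  assumes x: "x \<in> Bp \<Omega> p r" and p: "p > 0"
  shows "(LINT s|lebesgue_on \<Omega>. norm (x s) powr p) \<le> r powr p"
proof -
  let ?I = "\<integral>\<^sup>+ s. ennreal (norm (x s) powr p) \<partial>lebesgue_on \<Omega>"
  have "(LINT s|lebesgue_on \<Omega>. norm (x s) powr p) = enn2real ?I"
    using x by (intro integral_eq_nn_integral) (auto simp: Bp_def Lp_space_def)
  also have "\<dots> = (enn2real ?I powr (1/p)) powr p"
    using p by (simp add: powr_powr)
  also have "\<dots> \<le> r powr p"
    using x p by (intro powr_mono2) (auto simp: Bp_def Lp_norm_def)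
  finally show ?thesis .
qed

lemma integrable_Lp_space:
  assumes \<Omega>: "\<Omega> \<in> lmeasurable" and p: "p \<ge> 1" and x: "x \<in> Lp_space \<Omega> p"
  shows "integrable (lebesgue_on \<Omega>) x"
proof -
  interpret finite_measure "lebesgue_on \<Omega>" using \<Omega> by (rule finite_measure_lebesgue_on)
  have x_meas: "x \<in> borel_measurable (lebesgue_on \<Omega>)"
    using x by (simp add: Lp_space_def)
  have le: "norm (x s) \<le> 1 + norm (x s) powr p" for s
  proof (cases "norm (x s) \<le> 1")
    case False
    then have "norm (x s) = norm (x s) powr 1" by simp
    also have "\<dots> \<le> norm (x s) powr p" using False p by (intro powr_mono) auto
    finally show ?thesis by simp
  qed (use powr_ge_zero[of "norm (x s)" p] in linarith)
  have "integrable (lebesgue_on \<Omega>) (\<lambda>s. norm (x s))"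
  proof (rule Bochner_Integration.integrable_bound[where f = "\<lambda>s. 1 + norm (x s) powr p"])
    show "integrable (lebesgue_on \<Omega>) (\<lambda>s. 1 + norm (x s) powr p)"
      using integrable_norm_powr_Lp_space[OF x] by simp
    show "(\<lambda>s. norm (x s)) \<in> borel_measurable (lebesgue_on \<Omega>)"
      using x_meas by measurable
  qed (use le in \<open>auto intro: AE_I2\<close>)
  then show ?thesis
    using integrable_norm_iff[OF x_meas] by simp
qed

lemma norm_matrix_vector_mult_le:
  fixes A :: "real^'n^'m"
  shows "norm (A *v x) \<le> norm A * norm x"
proof -
  have row: "\<bar>(A *v x) $ i\<bar> \<le> norm (A $ i) * norm x" for i
  proof -
    have "(A *v x) $ i = A $ i \<bullet> x" by (simp add: matrix_vector_mult_def inner_vec_def)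
    then show ?thesis using Cauchy_Schwarz_ineq2 by simp
  qed
  have "norm (A *v x) = L2_set (\<lambda>i. \<bar>(A *v x) $ i\<bar>) UNIV" by (simp add: norm_vec_def)
  also have "\<dots> \<le> L2_set (\<lambda>i. norm (A $ i) * norm x) UNIV" by (rule L2_set_mono) (use row in auto)
  also have "\<dots> = norm A * norm x" by (simp add: L2_set_left_distrib norm_vec_def)
  finally show ?thesis .
qed

lemma norm_le_Mker:
  fixes K :: "'k::euclidean_space \<Rightarrow> 'k \<Rightarrow> real^'n^'m"
  assumes "compact \<Omega>" "continuous_on (\<Omega> \<times> \<Omega>) (\<lambda>(\<xi>, s). K \<xi> s)" "\<xi> \<in> \<Omega>" "s \<in> \<Omega>"
  shows "norm (K \<xi> s) \<le> Mker \<Omega> K"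
proof -
  have "compact ((\<lambda>z. norm ((\<lambda>(\<xi>, s). K \<xi> s) z)) ` (\<Omega> \<times> \<Omega>))"
    using assms(1,2) by (intro compact_continuous_image compact_Times continuous_on_norm)
  then have "bdd_above ((\<lambda>(\<xi>, s). norm (K \<xi> s)) ` (\<Omega> \<times> \<Omega>))"
    by (auto intro!: bounded_imp_bdd_above compact_imp_bounded simp: case_prod_unfold)
  then show ?thesis unfolding Mker_def
    by (rule cSup_upper[rotated]) (use assms in auto)
qed

lemma borel_measurable_kernel_slice:
  fixes K :: "'k::euclidean_space \<Rightarrow> 'k \<Rightarrow> real^'n^'m"
  assumes "compact \<Omega>" "continuous_on (\<Omega> \<times> \<Omega>) (\<lambda>(\<xi>, s). K \<xi> s)" "\<xi> \<in> \<Omega>"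
  shows "K \<xi> \<in> borel_measurable (lebesgue_on \<Omega>)"
proof -
  have "continuous_on \<Omega> (\<lambda>s. (\<lambda>(\<xi>, s). K \<xi> s) (\<xi>, s))"
    by (rule continuous_on_compose2[OF assms(2)]) (use assms(3) in \<open>auto intro!: continuous_intros\<close>)
  then show ?thesis
    using assms(1) lmeasurable_compact
    by (intro continuous_imp_measurable_on_sets_lebesgue) (auto simp: fmeasurable_def)
qed

lemma norm_kernel_mult_le:
  fixes K :: "'k::euclidean_space \<Rightarrow> 'k \<Rightarrow> real^'n^'m"
  assumes "compact \<Omega>" "continuous_on (\<Omega> \<times> \<Omega>) (\<lambda>(\<xi>, s). K \<xi> s)" "\<xi> \<in> \<Omega>" "s \<in> \<Omega>"
  shows "norm (K \<xi> s *v v) \<le> Mker \<Omega> K * norm v"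
  using norm_le_Mker[OF assms]
  by (intro order_trans[OF norm_matrix_vector_mult_le] mult_right_mono) auto

lemma integrable_kernel_mult:
  fixes K :: "'k::euclidean_space \<Rightarrow> 'k \<Rightarrow> real^'n^'m" and f :: "'k \<Rightarrow> real^'n"
  assumes \<Omega>: "compact \<Omega>" and K: "continuous_on (\<Omega> \<times> \<Omega>) (\<lambda>(\<xi>, s). K \<xi> s)"
    and \<xi>: "\<xi> \<in> \<Omega>" and f: "integrable (lebesgue_on \<Omega>) f"
  shows "integrable (lebesgue_on \<Omega>) (\<lambda>s. K \<xi> s *v f s)"
proof (rule Bochner_Integration.integrable_bound[where f = "\<lambda>s. Mker \<Omega> K * norm (f s)"])
  show "integrable (lebesgue_on \<Omega>) (\<lambda>s. Mker \<Omega> K * norm (f s))"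
    using f by simp
  have mult_cont: "continuous_on UNIV (\<lambda>z::(real^'n^'m) \<times> (real^'n). fst z *v snd z)"
    unfolding matrix_vector_mult_def by (intro continuous_intros)
  show "(\<lambda>s. K \<xi> s *v f s) \<in> borel_measurable (lebesgue_on \<Omega>)"
    using borel_measurable_continuous_Pair[OF borel_measurable_kernel_slice[OF \<Omega> K \<xi>]
        borel_measurable_integrable[OF f] mult_cont] .
  have "0 \<le> Mker \<Omega> K"
    using norm_le_Mker[OF \<Omega> K \<xi> \<xi>] norm_ge_zero order_trans by blast
  then show "AE s in lebesgue_on \<Omega>. norm (K \<xi> s *v f s) \<le> norm (Mker \<Omega> K * norm (f s))"
    using norm_kernel_mult_le[OF \<Omega> K \<xi>] by (intro AE_I2) auto
qed

lemma F_op_diff: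
  fixes K :: "'k::euclidean_space \<Rightarrow> 'k \<Rightarrow> real^'n^'m" and x y :: "'k \<Rightarrow> real^'n"
  assumes "compact \<Omega>" "continuous_on (\<Omega> \<times> \<Omega>) (\<lambda>(\<xi>, s). K \<xi> s)" "\<xi> \<in> \<Omega>"
    and "integrable (lebesgue_on \<Omega>) x" "integrable (lebesgue_on \<Omega>) y"
  shows "F_op \<Omega> K x \<xi> - F_op \<Omega> K y \<xi> = F_op \<Omega> K (\<lambda>s. x s - y s) \<xi>"
  unfolding F_op_def
  by (simp add: integral_diff[symmetric] integrable_kernel_mult[OF assms(1-3)] assms(4,5)
      matrix_vector_mult_diff_distrib)

lemma norm_F_op_le:
  fixes K :: "'k::euclidean_space \<Rightarrow> 'k \<Rightarrow> real^'n^'m" and f :: "'k \<Rightarrow> real^'n"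
  assumes \<Omega>: "compact \<Omega>" and K: "continuous_on (\<Omega> \<times> \<Omega>) (\<lambda>(\<xi>, s). K \<xi> s)"
    and \<xi>: "\<xi> \<in> \<Omega>" and f: "integrable (lebesgue_on \<Omega>) f"
  shows "norm (F_op \<Omega> K f \<xi>) \<le> Mker \<Omega> K * (LINT s|lebesgue_on \<Omega>. norm (f s))"
proof -
  have "norm (F_op \<Omega> K f \<xi>) \<le> (LINT s|lebesgue_on \<Omega>. Mker \<Omega> K * norm (f s))"
    unfolding F_op_def
  proof (rule Bochner_Integration.integral_norm_bound_integral)
    show "integrable (lebesgue_on \<Omega>) (\<lambda>s. K \<xi> s *v f s)"
      using \<Omega> K \<xi> f by (rule integrable_kernel_mult)
    show "integrable (lebesgue_on \<Omega>) (\<lambda>s. Mker \<Omega> K * norm (f s))"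
      using f by simp
  qed (use norm_kernel_mult_le[OF \<Omega> K \<xi>] in simp)
  then show ?thesis by simp
qed

definition truncation :: "real \<Rightarrow> ('a \<Rightarrow> 'b::real_normed_vector) \<Rightarrow> 'a \<Rightarrow> 'b" where
  "truncation \<gamma> x s = (if norm (x s) \<le> \<gamma> then x s else 0)"

lemma norm_truncation_le: "norm (truncation \<gamma> x s) \<le> norm (x s)"
  by (simp add: truncation_def)

lemma norm_sub_truncation_le:
  assumes "\<gamma> > 0" "p \<ge> 1"
  shows "norm (x s - truncation \<gamma> x s) \<le> norm (x s) powr p / \<gamma> powr (p - 1)"
proof (cases "norm (x s) \<le> \<gamma>")
  case False
  have "norm (x s) * \<gamma> powr (p - 1) \<le> norm (x s) * norm (x s) powr (p - 1)"
    using False assms by (intro mult_left_mono powr_mono2) auto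
  also have "\<dots> = norm (x s) powr p"
    using False assms by (simp add: powr_mult_base)
  finally show ?thesis
    using False assms by (simp add: truncation_def pos_le_divide_eq)
qed (simp add: truncation_def)

lemma truncation_in_Bp_gamma:
  fixes x :: "'a::euclidean_space \<Rightarrow> 'b::euclidean_space"
  assumes x: "x \<in> Bp \<Omega> p r" and p: "p > 0" and \<gamma>: "\<gamma> \<ge> 0"
  shows "truncation \<gamma> x \<in> Bp_gamma \<Omega> p r \<gamma>"
proof -
  let ?I = "\<lambda>f. \<integral>\<^sup>+ s. ennreal (norm (f s) powr p) \<partial>lebesgue_on \<Omega>"
  have x_meas [measurable]: "x \<in> borel_measurable (lebesgue_on \<Omega>)" and x_fin: "?I x < \<infinity>"
    using x by (auto simp: Bp_def Lp_space_def)
  have "truncation \<gamma> x \<in> borel_measurable (lebesgue_on \<Omega>)"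
    unfolding truncation_def[abs_def] by measurable
  moreover have le: "?I (truncation \<gamma> x) \<le> ?I x"
    using p by (intro nn_integral_mono) (auto intro!: powr_mono2 simp: norm_truncation_le)
  moreover have "Lp_norm \<Omega> p (truncation \<gamma> x) \<le> Lp_norm \<Omega> p x"
    unfolding Lp_norm_def using le x_fin p by (intro powr_mono2 enn2real_mono) auto
  ultimately show ?thesis
    using x x_fin \<gamma> by (auto simp: Bp_gamma_def Bp_def Lp_space_def truncation_def)
qed

lemma F_op_truncation_close:
  fixes K :: "'k::euclidean_space \<Rightarrow> 'k \<Rightarrow> real^'n^'m" and x :: "'k \<Rightarrow> real^'n"
  assumes \<Omega>: "compact \<Omega>" and K: "continuous_on (\<Omega> \<times> \<Omega>) (\<lambda>(\<xi>, s). K \<xi> s)"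
    and p: "p \<ge> 1" and \<gamma>: "\<gamma> > 0" and x: "x \<in> Bp \<Omega> p r" and \<xi>: "\<xi> \<in> \<Omega>"
  shows "norm (F_op \<Omega> K x \<xi> - F_op \<Omega> K (truncation \<gamma> x) \<xi>) \<le> Mker \<Omega> K * r powr p / \<gamma> powr (p - 1)"
proof -
  let ?L = "lebesgue_on \<Omega>" and ?y = "truncation \<gamma> x"
  have x_Lp: "x \<in> Lp_space \<Omega> p" using x by (simp add: Bp_def)
  have x_int: "integrable ?L x"
    using lmeasurable_compact[OF \<Omega>] p x_Lp by (rule integrable_Lp_space)
  have y_int: "integrable ?L ?y"
    using lmeasurable_compact[OF \<Omega>] p truncation_in_Bp_gamma[OF x, of \<gamma>] \<gamma>
    by (intro integrable_Lp_space) (auto simp: Bp_gamma_def Bp_def)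
  have M: "0 \<le> Mker \<Omega> K"
    using norm_le_Mker[OF \<Omega> K \<xi> \<xi>] norm_ge_zero order_trans by blast
  have "norm (F_op \<Omega> K x \<xi> - F_op \<Omega> K ?y \<xi>) \<le> Mker \<Omega> K * (LINT s|?L. norm (x s - ?y s))"
    using F_op_diff[OF \<Omega> K \<xi> x_int y_int] norm_F_op_le[OF \<Omega> K \<xi>] x_int y_int by simp
  also have "\<dots> \<le> Mker \<Omega> K * (LINT s|?L. norm (x s) powr p / \<gamma> powr (p - 1))"
    using M x_int y_int integrable_norm_powr_Lp_space[OF x_Lp] norm_sub_truncation_le[OF \<gamma> p]
    by (intro mult_left_mono integral_mono) auto
  also have "\<dots> = Mker \<Omega> K * (LINT s|?L. norm (x s) powr p) / \<gamma> powr (p - 1)"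
    by simp
  also have "\<dots> \<le> Mker \<Omega> K * r powr p / \<gamma> powr (p - 1)"
    using M p integral_norm_powr_le_Bp[OF x] by (intro divide_right_mono mult_left_mono) auto
  finally show ?thesis .
qed

lemma hausdorff_q_le_of_subset:
  assumes sub: "V \<subseteq> U" and ne: "V \<noteq> {}"
    and approx: "\<And>u. u \<in> U \<Longrightarrow> \<exists>v\<in>V. Lp_norm \<Omega> q (\<lambda>\<xi>. u \<xi> - v \<xi>) \<le> B"
  shows "hausdorff_q \<Omega> q U V \<le> B"
proof -
  have bdd: "bdd_below ((\<lambda>w. Lp_norm \<Omega> q (g w)) ` S)" for g :: "_ \<Rightarrow> _ \<Rightarrow> _" and S
    using Lp_norm_nonneg by (intro bdd_belowI) auto
  obtain v0 where "v0 \<in> V" using ne by auto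
  then have B: "0 \<le> B"
    using sub approx Lp_norm_nonneg order_trans by blast
  have "(INF v\<in>V. Lp_norm \<Omega> q (\<lambda>\<xi>. u \<xi> - v \<xi>)) \<le> B" if "u \<in> U" for u
    using approx[OF that] by (auto intro: cINF_lower2[OF bdd])
  moreover have "(INF u\<in>U. Lp_norm \<Omega> q (\<lambda>\<xi>. u \<xi> - v \<xi>)) \<le> B" if "v \<in> V" for v
    using that sub B by (intro cINF_lower2[OF bdd, of v]) (auto simp: Lp_norm_def)
  ultimately show ?thesis
    unfolding hausdorff_q_def using ne sub by (auto intro!: cSUP_least)
qed

theorem mainTheorem4:
  fixes \<Omega> :: "(real^'k) set"
    and K :: "real \<Rightarrow> real^'k \<Rightarrow> real^'k \<Rightarrow> real^'n^'m"
    and p q r lam \<gamma> :: real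
  assumes "compact \<Omega>"
    and "p > 1" and "1 / p + 1 / q = 1" and "r > 0"
    and "lam > 0" and "\<gamma> > 0"
    and "continuous_on (\<Omega> \<times> \<Omega>) (\<lambda>(\<xi>, s). K lam \<xi> s)"
  shows "hausdorff_q \<Omega> q
           ((\<lambda>x. F_op \<Omega> (K lam) x) ` (Bp \<Omega> p r :: (real^'k \<Rightarrow> real^'n) set))
           ((\<lambda>x. F_op \<Omega> (K lam) x) ` (Bp_gamma \<Omega> p r \<gamma> :: (real^'k \<Rightarrow> real^'n) set))
         \<le> 2 * r powr p * measure lebesgue \<Omega> powr (1 / q) * Mker \<Omega> (K lam) / \<gamma> powr (p - 1)"
proof -
  note \<Omega> = assms(1) and p = assms(2) and \<gamma> = assms(6) and K = assms(7)
  let ?F = "\<lambda>x. F_op \<Omega> (K lam) x"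
  let ?B = "Bp \<Omega> p r :: (real^'k \<Rightarrow> real^'n) set"
  let ?B\<gamma> = "Bp_gamma \<Omega> p r \<gamma> :: (real^'k \<Rightarrow> real^'n) set"
  define C where "C = Mker \<Omega> (K lam) * r powr p / \<gamma> powr (p - 1) * measure lebesgue \<Omega> powr (1 / q)"
  have "1 / q = 1 - 1 / p"
    using assms(3) by simp
  moreover have "1 / p < 1"
    using p by simp
  ultimately have "1 / q > 0"
    by linarith
  then have q: "q > 0"
    by simp
  have approx: "\<exists>y\<in>?B\<gamma>. Lp_norm \<Omega> q (\<lambda>\<xi>. ?F x \<xi> - ?F y \<xi>) \<le> C" if x: "x \<in> ?B" for x
  proof
    show "truncation \<gamma> x \<in> ?B\<gamma>"
      using x p \<gamma> by (intro truncation_in_Bp_gamma) auto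
    show "Lp_norm \<Omega> q (\<lambda>\<xi>. ?F x \<xi> - ?F (truncation \<gamma> x) \<xi>) \<le> C"
      unfolding C_def using lmeasurable_compact[OF \<Omega>] q
      by (rule Lp_norm_le_const) (use F_op_truncation_close[OF \<Omega> K _ \<gamma> x] p in simp)
  qed
  have sub: "?B\<gamma> \<subseteq> ?B"
    by (auto simp: Bp_gamma_def)
  have zero: "(\<lambda>_. 0) \<in> ?B\<gamma>"
    using assms(4) p \<gamma> by (simp add: Bp_gamma_def Bp_def Lp_space_def Lp_norm_def)
  have "hausdorff_q \<Omega> q (?F ` ?B) (?F ` ?B\<gamma>) \<le> C"
  proof (rule hausdorff_q_le_of_subset)
    show "?F ` ?B\<gamma> \<subseteq> ?F ` ?B" "?F ` ?B\<gamma> \<noteq> {}"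
      using sub zero by auto
    fix u assume "u \<in> ?F ` ?B"
    then obtain x where "x \<in> ?B" "u = ?F x" by blast
    then show "\<exists>v\<in>?F ` ?B\<gamma>. Lp_norm \<Omega> q (\<lambda>\<xi>. u \<xi> - v \<xi>) \<le> C"
      using approx by blast
  qed
  moreover have "0 \<le> C"
    using approx[of "\<lambda>_. 0"] zero sub Lp_norm_nonneg order_trans by blast
  ultimately show ?thesis
    unfolding C_def by (simp add: field_simps)
qed

end
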